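(* Let $\mathcal{A}$ be a complex vector space with a linear endomorphism $\alpha$ and two bilinear operations $\circ$ and $[\cdot,\cdot]$. Let $\mathcal{R}_{\mathcal{A}}=\mathbb{C}[\partial]\otimes\mathcal{A}$ be the free $\mathbb{C}[\partial]$-module over $\mathcal{A}$, extend $\alpha$ by $\alpha(f(\partial)\otimes u)=f(\partial)\otimes\alpha(u)$, and define a $\lambda$-bracket on $\mathcal{A}$ by $[u_\lambda v]=[v,u]+\partial(v\circ u)+\lambda(v\circ u+u\circ v)$ for $u,v\in\mathcal{A}$, extended to $\mathcal{R}_{\mathcal{A}}$ by $[f(\partial)u_\lambda\, h(\partial)v]=f(-\lambda)h(\partial+\lambda)[u_\lambda v]$. Then $(\mathcal{A},[\cdot,\cdot],\circ,\alpha)$ is a Hom Gel'fand-Dorfman bialgebra if and only if $(\mathcal{R}_{\mathcal{A}},[\cdot_\lambda\cdot],\alpha)$ is a Hom-Lie conformal algebra of degree $2$.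
   Context: A Hom-Lie algebra is a vector space with a bilinear map $[\cdot,\cdot]$ and linear map $\alpha$ with $[x,y]=-[y,x]$ and $[[x,y],\alpha(z)]+[[y,z],\alpha(x)]+[[z,x],\alpha(y)]=0$. A Hom-Novikov algebra is a vector space with a bilinear operation $\circ$ and linear endomorphism $\alpha$ such that $(x\circ y)\circ\alpha(z)-\alpha(x)\circ(y\circ z)=(y\circ x)\circ\alpha(z)-\alpha(y)\circ(x\circ z)$ and $(x\circ y)\circ\alpha(z)=(x\circ z)\circ\alpha(y)$. A Hom Gel'fand-Dorfman bialgebra is a vector space $\mathcal{A}$ with a linear endomorphism $\alpha$ and two bilinear operations $[\cdot,\cdot],\circ$ such that $(\mathcal{A},[\cdot,\cdot],\alpha)$ is a Hom-Lie algebra, $(\mathcal{A},\circ,\alpha)$ is a Hom-Novikov algebra, and $[x\circ y,\alpha(z)]-[x\circ z,\alpha(y)]+[x,y]\circ\alpha(z)-[x,z]\circ\alpha(y)-\alpha(x)\circ[y,z]=0$ for all $x,y,z$. A Hom-Lie conformal algebra is a $\mathbb{C}[\partial]$-module $\mathcal{R}$ with a linear endomorphism $\alpha$ satisfying $\alpha\partial=\partial\alpha$ and a $\mathbb{C}$-bilinear map $[\cdot_\lambda\cdot]:\mathcal{R}\otimes\mathcal{R}\to\mathcal{R}[\lambda]=\mathbb{C}[\lambda]\otimes\mathcal{R}$ such that for all $a,b,c\in\mathcal{R}$: $[\partial a_\lambda b]=-\lambda[a_\lambda b]$; $[a_\lambda b]=-[b_{-\lambda-\partial}a]$ (meaning: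 if $[b_\mu a]=\sum_j\mu^jc_j$ then $[b_{-\lambda-\partial}a]=\sum_j(-\lambda-\partial)^jc_j$); and $[\alpha(a)_\lambda[b_\mu c]]=[[a_\lambda b]_{\lambda+\mu}\alpha(c)]+[\alpha(b)_\mu[a_\lambda c]]$ (brackets extended coefficientwise in $\lambda,\mu$). For a positive integer $m$, it is of degree $m$ if for all $a,b\in\mathcal{R}$ there are $w_{i,j}\in\mathcal{R}$ with $[a_\lambda b]=\sum_{j\ge0,\,i+j<m}\partial^iw_{i,j}\lambda^j$. *)

theory Defs
  imports "HOL-Analysis.Analysis" "HOL-Library.Function_Algebras"
begin

definition hom_lie :: "('a::ab_group_add \<Rightarrow> 'a \<Rightarrow> 'a) \<Rightarrow> ('a \<Rightarrow> 'a) \<Rightarrow> bool" where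
  "hom_lie br \<alpha> \<longleftrightarrow>
     (\<forall>x y. br x y = - br y x) \<and>
     (\<forall>x y z. br (br x y) (\<alpha> z) + br (br y z) (\<alpha> x) + br (br z x) (\<alpha> y) = 0)"

definition hom_novikov :: "('a::ab_group_add \<Rightarrow> 'a \<Rightarrow> 'a) \<Rightarrow> ('a \<Rightarrow> 'a) \<Rightarrow> bool" where
  "hom_novikov circ \<alpha> \<longleftrightarrow>
     (\<forall>x y z. circ (circ x y) (\<alpha> z) - circ (\<alpha> x) (circ y z)
              = circ (circ y x) (\<alpha> z) - circ (\<alpha> y) (circ x z)) \<and>
     (\<forall>x y z. circ (circ x y) (\<alpha> z) = circ (circ x z) (\<alpha> y))"

definition hom_GD_bialgebra ::
  "('a::ab_group_add \<Rightarrow> 'a \<Rightarrow> 'a) \<Rightarrow> ('a \<Rightarrow> 'a \<Rightarrow> 'a) \<Rightarrow> ('a \<Rightarrow> 'a) \<Rightarrow> bool" where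
  "hom_GD_bialgebra br circ \<alpha> \<longleftrightarrow>
     hom_lie br \<alpha> \<and> hom_novikov circ \<alpha> \<and>
     (\<forall>x y z. br (circ x y) (\<alpha> z) - br (circ x z) (\<alpha> y) + circ (br x y) (\<alpha> z)
              - circ (br x z) (\<alpha> y) - circ (\<alpha> x) (br y z) = 0)"

definition cbilinear :: "(complex \<Rightarrow> 'a::ab_group_add \<Rightarrow> 'a) \<Rightarrow> ('a \<Rightarrow> 'a \<Rightarrow> 'a) \<Rightarrow> bool" where
  "cbilinear sc f \<longleftrightarrow> (\<forall>x. Vector_Spaces.linear sc sc (f x)) \<and> (\<forall>y. Vector_Spaces.linear sc sc (\<lambda>x. f x y))"

text \<open>The C[d]-module is a C-subspace M (with scalar multiplication sc) together with a
  C-linear operator D (the action of d). An element of M[lambda] is represented by its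
  coefficient sequence nat => 'r (coefficient of lambda^j), with finite support.\<close>

definition hom_lie_conformal ::
  "(complex \<Rightarrow> 'r::ab_group_add \<Rightarrow> 'r) \<Rightarrow> 'r set \<Rightarrow> ('r \<Rightarrow> 'r) \<Rightarrow> ('r \<Rightarrow> 'r)
     \<Rightarrow> ('r \<Rightarrow> 'r \<Rightarrow> nat \<Rightarrow> 'r) \<Rightarrow> bool" where
  "hom_lie_conformal sc M D \<alpha> B \<longleftrightarrow>
     vector_space sc \<and>
     0 \<in> M \<and> (\<forall>a\<in>M. \<forall>b\<in>M. a + b \<in> M) \<and> (\<forall>c. \<forall>a\<in>M. sc c a \<in> M) \<and>
     (\<forall>a\<in>M. D a \<in> M \<and> \<alpha> a \<in> M \<and> \<alpha> (D a) = D (\<alpha> a)) \<and>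
     (\<forall>a\<in>M. \<forall>b\<in>M. D (a + b) = D a + D b \<and> \<alpha> (a + b) = \<alpha> a + \<alpha> b) \<and>
     (\<forall>c. \<forall>a\<in>M. D (sc c a) = sc c (D a) \<and> \<alpha> (sc c a) = sc c (\<alpha> a)) \<and>
     (\<forall>a\<in>M. \<forall>b\<in>M. finite {j. B a b j \<noteq> 0} \<and> (\<forall>j. B a b j \<in> M)) \<and>
     (\<forall>a\<in>M. \<forall>b\<in>M. \<forall>c\<in>M. \<forall>j.
        B (a + b) c j = B a c j + B b c j \<and> B c (a + b) j = B c a j + B c b j) \<and>
     (\<forall>z. \<forall>a\<in>M. \<forall>b\<in>M. \<forall>j. B (sc z a) b j = sc z (B a b j) \<and> B a (sc z b) j = sc z (B a b j)) \<and>
     \<comment> \<open>[d a_lambda b] = - lambda [a_lambda b]\<close>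
     (\<forall>a\<in>M. \<forall>b\<in>M. \<forall>j. B (D a) b j = (if j = 0 then 0 else - B a b (j - 1))) \<and>
     \<comment> \<open>[a_lambda b] = - [b_(-lambda-d) a]; coefficient of lambda^k\<close>
     (\<forall>a\<in>M. \<forall>b\<in>M. \<forall>k. B a b k =
        - (\<Sum>j\<in>{j. B b a j \<noteq> 0}. sc ((-1) ^ j * of_nat (j choose k)) ((D ^^ (j - k)) (B b a j)))) \<and>
     \<comment> \<open>Hom-Jacobi identity; coefficient of lambda^j mu^k\<close>
     (\<forall>a\<in>M. \<forall>b\<in>M. \<forall>c\<in>M. \<forall>j k.
        B (\<alpha> a) (B b c k) j =
          (\<Sum>p\<le>j. sc (of_nat ((k + j - p) choose (j - p))) (B (B a b p) (\<alpha> c) (k + j - p)))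
          + B (\<alpha> b) (B a c j) k)"

text \<open>An element of R_A is represented by its coefficient sequence f :: nat => 'a
  (f i = coefficient of d^i), with finite support. An element of R_A[lambda] is
  P :: nat => nat => 'a, where P j i is the coefficient of lambda^j d^i.\<close>

definition RA :: "(nat \<Rightarrow> 'a::zero) set" where
  "RA = {f. finite {i. f i \<noteq> 0}}"

definition RA_scale :: "(complex \<Rightarrow> 'a \<Rightarrow> 'a) \<Rightarrow> complex \<Rightarrow> (nat \<Rightarrow> 'a) \<Rightarrow> (nat \<Rightarrow> 'a)" where
  "RA_scale sc c f = (\<lambda>i. sc c (f i))"

definition RA_D :: "(nat \<Rightarrow> 'a::zero) \<Rightarrow> (nat \<Rightarrow> 'a)" where
  "RA_D f = (\<lambda>i. if i = 0 then 0 else f (i - 1))"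

definition RA_alpha :: "('a \<Rightarrow> 'a) \<Rightarrow> (nat \<Rightarrow> 'a) \<Rightarrow> (nat \<Rightarrow> 'a)" where
  "RA_alpha \<alpha> f = (\<lambda>i. \<alpha> (f i))"

definition RA_emb :: "'a::zero \<Rightarrow> (nat \<Rightarrow> 'a)" where
  "RA_emb u = (\<lambda>i. if i = 0 then u else 0)"

text \<open>[u_lambda v] = [v,u] + d (v o u) + lambda (v o u + u o v), for u, v in A.\<close>
definition gen_bracket ::
  "('a::ab_group_add \<Rightarrow> 'a \<Rightarrow> 'a) \<Rightarrow> ('a \<Rightarrow> 'a \<Rightarrow> 'a) \<Rightarrow> 'a \<Rightarrow> 'a \<Rightarrow> nat \<Rightarrow> nat \<Rightarrow> 'a" where
  "gen_bracket br circ u v = (\<lambda>j i.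
     if j = 0 \<and> i = 0 then br v u
     else if j = 0 \<and> i = 1 then circ v u
     else if j = 1 \<and> i = 0 then circ v u + circ u v
     else 0)"

text \<open>Multiplication of an element of R_A[lambda] by (-lambda)^p.\<close>
definition neg_lam_pow :: "(complex \<Rightarrow> 'a \<Rightarrow> 'a) \<Rightarrow> nat \<Rightarrow> (nat \<Rightarrow> nat \<Rightarrow> 'a::zero) \<Rightarrow> nat \<Rightarrow> nat \<Rightarrow> 'a" where
  "neg_lam_pow sc p P = (\<lambda>j i. if p \<le> j then sc ((-1) ^ p) (P (j - p) i) else 0)"

text \<open>Multiplication of an element of R_A[lambda] by (d + lambda)^q.\<close>
definition dlam_pow :: "(complex \<Rightarrow> 'a \<Rightarrow> 'a) \<Rightarrow> nat \<Rightarrow> (nat \<Rightarrow> nat \<Rightarrow> 'a::comm_monoid_add) \<Rightarrow> nat \<Rightarrow> nat \<Rightarrow> 'a" where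
  "dlam_pow sc q P = (\<lambda>j i. \<Sum>s\<le>q.
     if s \<le> j \<and> q - s \<le> i then sc (of_nat (q choose s)) (P (j - s) (i - (q - s))) else 0)"

text \<open>[f(d) u_lambda h(d) v] = f(-lambda) h(d+lambda) [u_lambda v], extended bilinearly:
  for a = sum_p d^p u_p and b = sum_q d^q v_q, the bracket is
  sum_{p,q} (-lambda)^p (d+lambda)^q [u_p lambda v_q]. Terms with p > j or q > i + j
  do not contribute to the coefficient of lambda^j d^i.\<close>
definition RA_bracket ::
  "(complex \<Rightarrow> 'a \<Rightarrow> 'a) \<Rightarrow> ('a::ab_group_add \<Rightarrow> 'a \<Rightarrow> 'a) \<Rightarrow> ('a \<Rightarrow> 'a \<Rightarrow> 'a)
     \<Rightarrow> (nat \<Rightarrow> 'a) \<Rightarrow> (nat \<Rightarrow> 'a) \<Rightarrow> nat \<Rightarrow> (nat \<Rightarrow> 'a)" where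
  "RA_bracket sc br circ a b = (\<lambda>j i.
     \<Sum>p\<le>j. \<Sum>q\<le>i + j. neg_lam_pow sc p (dlam_pow sc q (gen_bracket br circ (a p) (b q))) j i)"

text \<open>Degree m of a lambda-bracket on the free module C[d] \<otimes> A: for u, v in A,
  [u_lambda v] = sum_{j \<ge> 0, i + j < m} d^i w_{i,j} lambda^j with w_{i,j} in A.\<close>
definition RA_degree :: "nat \<Rightarrow> ((nat \<Rightarrow> 'a::zero) \<Rightarrow> (nat \<Rightarrow> 'a) \<Rightarrow> nat \<Rightarrow> (nat \<Rightarrow> 'a)) \<Rightarrow> bool" where
  "RA_degree m B \<longleftrightarrow> (\<forall>u v. \<exists>w :: nat \<Rightarrow> nat \<Rightarrow> 'a.
     \<forall>j. B (RA_emb u) (RA_emb v) j = (\<lambda>i. if i + j < m then w i j else 0))"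

end

theory Submission
  imports Defs
begin

text \<open>
  Elements of \<open>R\<^sub>A = \<complex>[\<partial>] \<otimes> A\<close> are polynomials in \<open>\<partial>\<close> with coefficients in \<open>A\<close>, and
  \<open>\<lambda>\<close>-brackets are polynomials in \<open>\<lambda>\<close> and \<open>\<partial>\<close>; over \<open>\<complex>\<close> such polynomials are determined
  by their values. Evaluating at \<open>\<lambda> = x\<close>, \<open>\<partial> = y\<close>, the bracket \<open>[f(\<partial>)u\<^sub>\<lambda> h(\<partial>)v]\<close>
  becomes \<open>\<Phi>(f(-x)u, h(y+x)v, x, y)\<close> with \<open>\<Phi>(u, v, x, y) = [v,u] + y (v\<circ>u) + x (v\<circ>u + u\<circ>v)\<close>.
  So every axiom of a Hom-Lie conformal algebra on \<open>R\<^sub>A\<close> becomes an identity for \<open>\<Phi>\<close> on \<open>A\<close>: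
  sesquilinearity, bilinearity and degree 2 hold automatically, conformal skew-symmetry says
  exactly that \<open>[\<cdot>,\<cdot>]\<close> is skew, and the conformal Hom-Jacobi identity is a polynomial identity
  of degree 2 in \<open>\<lambda>, \<mu>, \<partial>\<close> whose coefficients are combinations of the Hom-Lie, Hom-Novikov
  and compatibility identities, all of which are recovered from the coefficients of
  \<open>1, \<partial>, \<partial>\<^sup>2\<close> and \<open>\<mu>\<^sup>2\<close>.
\<close>

section \<open>Finitely supported coefficient sequences\<close>

lemma sum_fun_apply: "(\<Sum>s\<in>A. F s) i = (\<Sum>s\<in>A. F s i)"
  by (induct A rule: infinite_finite_induct) auto

lemma RA_eventually_zero:
  assumes "f \<in> RA"
  obtains n where "\<And>i. n \<le> i \<Longrightarrow> f i = 0"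
proof -
  from assms obtain n where "{i. f i \<noteq> 0} \<subseteq> {..<n}"
    unfolding RA_def finite_nat_iff_bounded by blast
  then show ?thesis
    by (intro that[of n]) (auto simp: subset_eq not_less[symmetric])
qed

lemma RA_if_support_subset: "finite S \<Longrightarrow> (\<And>i. i \<notin> S \<Longrightarrow> f i = 0) \<Longrightarrow> f \<in> RA"
  unfolding RA_def by (metis (mono_tags, lifting) finite_subset mem_Collect_eq subsetI)

lemma RA_zero [simp]: "0 \<in> RA" "(\<lambda>i. 0) \<in> RA"
  by (simp_all add: RA_def)

lemma RA_add [simp]: "f \<in> RA \<Longrightarrow> g \<in> RA \<Longrightarrow> (\<lambda>i. f i + g i :: 'b::monoid_add) \<in> RA"
  by (rule RA_if_support_subset[of "{i. f i \<noteq> 0} \<union> {i. g i \<noteq> 0}"]) (auto simp: RA_def)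

lemma RA_plus [simp]: "f \<in> RA \<Longrightarrow> g \<in> RA \<Longrightarrow> f + (g :: nat \<Rightarrow> 'b::monoid_add) \<in> RA"
  using RA_add[of f g] by (simp add: plus_fun_def)

lemma RA_map: "f \<in> RA \<Longrightarrow> L 0 = 0 \<Longrightarrow> (\<lambda>i. L (f i)) \<in> RA"
  by (rule RA_if_support_subset[of "{i. f i \<noteq> 0}"]) (auto simp: RA_def)

lemma RA_uminus [simp]: "f \<in> RA \<Longrightarrow> (\<lambda>i. - f i :: 'b::group_add) \<in> RA"
  by (rule RA_map) auto

lemma RA_sum [simp]: "(\<And>s. s \<in> A \<Longrightarrow> G s \<in> RA) \<Longrightarrow> (\<lambda>i. \<Sum>s\<in>A. G s i :: 'b::comm_monoid_add) \<in> RA"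
  by (induct A rule: infinite_finite_induct) simp_all

lemma RA_emb_in_RA [simp]: "RA_emb u \<in> RA"
  by (rule RA_if_support_subset[of "{0}"]) (auto simp: RA_emb_def)

text \<open>Multiplication by \<open>\<partial>\<^sup>t\<close>.\<close>
definition shift :: "nat \<Rightarrow> (nat \<Rightarrow> 'b::zero) \<Rightarrow> nat \<Rightarrow> 'b" where
  "shift t f i = (if t \<le> i then f (i - t) else 0)"

lemma shift_0 [simp]: "shift 0 f = f"
  by (simp add: shift_def fun_eq_iff)

lemma shift_zero [simp]: "shift t 0 = 0"
  by (simp add: shift_def fun_eq_iff)

lemma RA_shift [simp]: "f \<in> RA \<Longrightarrow> shift t f \<in> RA"
  by (rule RA_if_support_subset[of "(\<lambda>i. i + t) ` {i. f i \<noteq> 0}"])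
    (auto simp: RA_def shift_def image_iff intro!: exI[of _ "_ - t"])

lemma RA_D_eq_shift: "RA_D = shift 1"
  by (auto simp: RA_D_def shift_def fun_eq_iff)

lemma RA_D_funpow: "(RA_D ^^ m) a = shift m a"
  by (induct m) (auto simp: RA_D_eq_shift shift_def fun_eq_iff)

lemma RA_D_in_RA [simp]: "a \<in> RA \<Longrightarrow> RA_D a \<in> RA"
  by (simp add: RA_D_eq_shift)

definition RA_lam :: "(nat \<Rightarrow> nat \<Rightarrow> 'b::zero) \<Rightarrow> bool" where
  "RA_lam P \<longleftrightarrow> finite {j. P j \<noteq> 0} \<and> (\<forall>j. P j \<in> RA)"

lemma RA_lam_if_support_subset:
  "finite J \<Longrightarrow> (\<And>j. j \<notin> J \<Longrightarrow> P j = 0) \<Longrightarrow> (\<And>j. P j \<in> RA) \<Longrightarrow> RA_lam P"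
  unfolding RA_lam_def by (metis (mono_tags, lifting) finite_subset mem_Collect_eq subsetI)

lemma RA_lam_zero [simp]: "RA_lam (\<lambda>j i. 0)"
  by (simp add: RA_lam_def zero_fun_def)

lemma RA_lam_add [simp]: "RA_lam P \<Longrightarrow> RA_lam Q \<Longrightarrow> RA_lam (\<lambda>j i. P j i + Q j i :: 'b::monoid_add)"
  by (rule RA_lam_if_support_subset[of "{j. P j \<noteq> 0} \<union> {j. Q j \<noteq> 0}"]) (auto simp: RA_lam_def)

lemma RA_lam_map: "RA_lam P \<Longrightarrow> L 0 = 0 \<Longrightarrow> RA_lam (\<lambda>j i. L (P j i))"
  by (rule RA_lam_if_support_subset[of "{j. P j \<noteq> 0}"]) (auto simp: RA_lam_def RA_map)

lemma RA_lam_sum [simp]: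
  "(\<And>s. s \<in> A \<Longrightarrow> RA_lam (G s)) \<Longrightarrow> RA_lam (\<lambda>j i. \<Sum>s\<in>A. G s j i :: 'b::comm_monoid_add)"
  by (induct A rule: infinite_finite_induct) simp_all

text \<open>Multiplication by \<open>\<lambda>\<^sup>s \<partial>\<^sup>t\<close>.\<close>
definition shift2 :: "nat \<Rightarrow> nat \<Rightarrow> (nat \<Rightarrow> nat \<Rightarrow> 'b::zero) \<Rightarrow> nat \<Rightarrow> nat \<Rightarrow> 'b" where
  "shift2 s t P = shift s (\<lambda>j. shift t (P j))"

lemma shift2_apply: "shift2 s t P j = (if s \<le> j then shift t (P (j - s)) else 0)"
  by (simp add: shift2_def shift_def)

lemma RA_lam_shift2 [simp]: "RA_lam P \<Longrightarrow> RA_lam (shift2 s t P)"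
proof (rule RA_lam_if_support_subset[of "(\<lambda>j. j + s) ` {j. P j \<noteq> 0}"])
  assume P: "RA_lam P"
  then show "finite ((\<lambda>j. j + s) ` {j. P j \<noteq> 0})" by (simp add: RA_lam_def)
  show "shift2 s t P j \<in> RA" for j using P by (simp add: shift2_apply RA_lam_def)
  show "shift2 s t P j = 0" if "j \<notin> (\<lambda>j. j + s) ` {j. P j \<noteq> 0}" for j
    using that by (force simp: shift2_apply intro: image_eqI[of _ _ "j - s"])
qed

definition RA_lam_mu :: "(nat \<Rightarrow> nat \<Rightarrow> nat \<Rightarrow> 'b::zero) \<Rightarrow> bool" where
  "RA_lam_mu Q \<longleftrightarrow> finite {j. Q j \<noteq> 0} \<and> (\<forall>j. RA_lam (Q j))"

lemma RA_lam_mu_if_support_subset: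
  assumes "finite J" "finite K" "\<And>j k. j \<notin> J \<or> k \<notin> K \<Longrightarrow> Q j k = 0" "\<And>j k. Q j k \<in> RA"
  shows "RA_lam_mu Q"
  unfolding RA_lam_mu_def
proof
  show "finite {j. Q j \<noteq> 0}"
    using assms(1,3) by (auto intro: finite_subset[of _ J] simp: fun_eq_iff)
  show "\<forall>j. RA_lam (Q j)"
    using assms(2-4) by (blast intro: RA_lam_if_support_subset[of K])
qed

lemma RA_lam_mu_add:
  assumes "RA_lam_mu P" "RA_lam_mu Q"
  shows "RA_lam_mu (\<lambda>j k. P j k + Q j k :: nat \<Rightarrow> 'b::monoid_add)"
  unfolding RA_lam_mu_def
proof
  show "finite {j. (\<lambda>k. P j k + Q j k) \<noteq> 0}"
    using assms by (auto intro: finite_subset[of _ "{j. P j \<noteq> 0} \<union> {j. Q j \<noteq> 0}"]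
        simp: RA_lam_mu_def fun_eq_iff)
  show "\<forall>j. RA_lam (\<lambda>k. P j k + Q j k)"
    using RA_lam_add[of "P _" "Q _"] assms by (simp add: RA_lam_mu_def plus_fun_def)
qed

lemma RA_lam_mu_transpose:
  assumes "RA_lam_mu Q"
  shows "RA_lam_mu (\<lambda>j k. Q k j)"
proof -
  define K where "K = {k. Q k \<noteq> 0}"
  define J where "J = (\<Union>k\<in>K. {j. Q k j \<noteq> 0})"
  have "finite K" "finite J"
    using assms by (auto simp: RA_lam_mu_def RA_lam_def K_def J_def)
  moreover have "Q k j = 0" if "j \<notin> J \<or> k \<notin> K" for j k
    using that by (auto simp: J_def K_def) (metis zero_fun_apply)
  ultimately show ?thesis
    using assms by (intro RA_lam_mu_if_support_subset[of J K]) (auto simp: RA_lam_mu_def RA_lam_def)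
qed

section \<open>Evaluating polynomials with vector coefficients\<close>

locale char0_vector_space = vector_space sc
  for sc :: "'f::field_char_0 \<Rightarrow> 'v::ab_group_add \<Rightarrow> 'v"
begin

lemma poly_coeffs_eq_0:
  assumes "\<And>i. n \<le> i \<Longrightarrow> f i = 0" and "\<And>y. (\<Sum>i<n. sc (y ^ i) (f i)) = 0"
  shows "f i = 0"
  using assms
proof (induction n arbitrary: f i)
  case (Suc n)
  \<comment> \<open>Comparing the polynomial at \<open>2 y\<close> with \<open>2\<^sup>n\<close> times its value at \<open>y\<close> removes the top coefficient.\<close>
  define g where "g i = (if i < n then sc (2 ^ i - 2 ^ n) (f i) else 0)" for i
  have "(\<Sum>i<n. sc (y ^ i) (g i)) = 0" for y
  proof -
    have "(\<Sum>i<n. sc (y ^ i) (g i)) = (\<Sum>i<Suc n. sc ((2 * y) ^ i) (f i)) - sc (2 ^ n) (\<Sum>i<Suc n. sc (y ^ i) (f i))"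
      by (simp add: g_def scale_sum_right sum_subtractf[symmetric] algebra_simps power_mult_distrib)
    then show ?thesis by (simp only: Suc.prems(2)) simp
  qed
  then have g0: "g i = 0" for i using Suc.IH[of g] by (simp add: g_def)
  have lower: "f i = 0" if "i < n" for i
  proof -
    have "(2::nat) ^ i \<noteq> 2 ^ n" using that by simp
    then have "(2 :: 'f) ^ i \<noteq> 2 ^ n" by (metis of_nat_eq_iff of_nat_numeral of_nat_power)
    then show ?thesis using g0[of i] that by (simp add: g_def)
  qed
  have "f n = 0" using Suc.prems(2)[of 1] lower by simp
  then show ?case using Suc.prems(1) lower by (metis le_neq_implies_less not_less_eq_eq)
qed simp

lemma quadratic_coeffs_eq_0:
  assumes "\<And>t. a0 + sc t a1 + sc (t * t) a2 = 0"
  shows "a0 = 0 \<and> a1 = 0 \<and> a2 = 0"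
proof -
  define f where "f i = (if i = 0 then a0 else if i = 1 then a1 else if i = 2 then a2 else 0)" for i :: nat
  have "(\<Sum>i<3. sc (t ^ i) (f i)) = 0" for t
    using assms[of t] by (simp add: f_def numeral_3_eq_3 power2_eq_square add.assoc)
  then have "f i = 0" for i by (rule poly_coeffs_eq_0[rotated]) (simp add: f_def)
  from this[of 0] this[of 1] this[of 2] show ?thesis by (simp add: f_def)
qed

lemma linear_simps:
  assumes "Vector_Spaces.linear sc sc f"
  shows "f (x + y) = f x + f y" "f (sc c x) = sc c (f x)" "f 0 = 0" "f (- x) = - f x"
    "f (x - y) = f x - f y" "f (sum g A) = (\<Sum>i\<in>A. f (g i))"
proof -
  interpret L: Vector_Spaces.linear sc sc f by fact
  show "f (x + y) = f x + f y" "f (sc c x) = sc c (f x)" "f 0 = 0" "f (- x) = - f x"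
    "f (x - y) = f x - f y" "f (sum g A) = (\<Sum>i\<in>A. f (g i))"
    by (simp_all add: L.add L.scale L.neg L.diff L.sum)
qed

lemma RA_scale_map [simp]: "f \<in> RA \<Longrightarrow> (\<lambda>i. sc c (f i)) \<in> RA"
  by (rule RA_map) simp_all

definition eval_poly :: "(nat \<Rightarrow> 'v) \<Rightarrow> 'f \<Rightarrow> 'v" where
  "eval_poly f y = (\<Sum>i\<in>{i. f i \<noteq> 0}. sc (y ^ i) (f i))"

lemma eval_poly_eq_sum:
  "finite S \<Longrightarrow> (\<And>i. i \<notin> S \<Longrightarrow> f i = 0) \<Longrightarrow> eval_poly f y = (\<Sum>i\<in>S. sc (y ^ i) (f i))"
  unfolding eval_poly_def by (rule sum.mono_neutral_left) auto

lemma eval_poly_zero [simp]: "eval_poly 0 y = 0" "eval_poly (\<lambda>i. 0) y = 0"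
  by (simp_all add: eval_poly_def)

lemma eval_poly_add:
  "f \<in> RA \<Longrightarrow> g \<in> RA \<Longrightarrow> eval_poly (\<lambda>i. f i + g i) y = eval_poly f y + eval_poly g y"
  by (subst (1 2 3) eval_poly_eq_sum[of "{i. f i \<noteq> 0} \<union> {i. g i \<noteq> 0}"])
    (auto simp: RA_def sum.distrib scale_right_distrib)

lemma eval_poly_linear:
  "Vector_Spaces.linear sc sc L \<Longrightarrow> f \<in> RA \<Longrightarrow> eval_poly (\<lambda>i. L (f i)) y = L (eval_poly f y)"
  by (subst (1 2) eval_poly_eq_sum[of "{i. f i \<noteq> 0}"])
    (auto simp: RA_def linear_simps)

lemma eval_poly_scale: "f \<in> RA \<Longrightarrow> eval_poly (\<lambda>i. sc c (f i)) y = sc c (eval_poly f y)"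
  by (subst (1 2) eval_poly_eq_sum[of "{i. f i \<noteq> 0}"]) (auto simp: RA_def scale_sum_right mult.commute)

lemma eval_poly_uminus: "f \<in> RA \<Longrightarrow> eval_poly (\<lambda>i. - f i) y = - eval_poly f y"
  by (subst (1 2) eval_poly_eq_sum[of "{i. f i \<noteq> 0}"]) (auto simp: RA_def sum_negf)

lemma eval_poly_sum:
  "finite A \<Longrightarrow> (\<And>s. s \<in> A \<Longrightarrow> F s \<in> RA) \<Longrightarrow> eval_poly (\<lambda>i. \<Sum>s\<in>A. F s i) y = (\<Sum>s\<in>A. eval_poly (F s) y)"
  by (induct A rule: finite_induct) (simp_all add: eval_poly_add)

lemma eval_poly_shift: "f \<in> RA \<Longrightarrow> eval_poly (shift t f) y = sc (y ^ t) (eval_poly f y)"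
proof -
  assume f: "f \<in> RA"
  let ?S = "{i. f i \<noteq> 0}"
  have "eval_poly (shift t f) y = (\<Sum>i\<in>(\<lambda>i. i + t) ` ?S. sc (y ^ i) (shift t f i))"
    by (rule eval_poly_eq_sum) (use f in \<open>auto simp: RA_def shift_def image_iff intro!: exI[of _ "_ - t"]\<close>)
  also have "\<dots> = (\<Sum>i\<in>?S. sc (y ^ (i + t)) (f i))"
    by (subst sum.reindex) (auto simp: shift_def)
  also have "\<dots> = sc (y ^ t) (eval_poly f y)"
    by (simp add: eval_poly_def scale_sum_right power_add mult.commute)
  finally show ?thesis .
qed

lemma eval_poly_RA_emb [simp]: "eval_poly (RA_emb u) y = u"
  by (subst eval_poly_eq_sum[of "{0}"]) (auto simp: RA_emb_def)

lemma eval_poly_inj: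
  assumes f: "f \<in> RA" and g: "g \<in> RA" and eq: "\<And>y. eval_poly f y = eval_poly g y"
  shows "f = g"
proof
  fix i
  obtain n where n: "\<And>i. n \<le> i \<Longrightarrow> f i + - g i = 0"
    using RA_eventually_zero[OF RA_add[OF f RA_uminus[OF g]]] by auto
  have "(\<Sum>i<n. sc (y ^ i) (f i + - g i)) = eval_poly (\<lambda>i. f i + - g i) y" for y
    by (rule eval_poly_eq_sum[symmetric]) (use n in auto)
  also have "eval_poly (\<lambda>i. f i + - g i) y = 0" for y
    using eval_poly_add[OF f RA_uminus[OF g]] by (simp add: eval_poly_uminus g eq)
  finally have "f i + - g i = 0" by (intro poly_coeffs_eq_0[OF n])
  then show "f i = g i" by simp
qed

lemma eval_poly_swap:
  assumes "finite J" "finite K" "\<And>j k. j \<notin> J \<or> k \<notin> K \<Longrightarrow> F j k = 0"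
  shows "eval_poly (\<lambda>j. eval_poly (\<lambda>k. F j k) z) x = eval_poly (\<lambda>k. eval_poly (\<lambda>j. F j k) x) z"
proof -
  have inner1: "eval_poly (\<lambda>k. F j k) z = (\<Sum>k\<in>K. sc (z ^ k) (F j k))" for j
    by (rule eval_poly_eq_sum) (use assms in auto)
  have inner2: "eval_poly (\<lambda>j. F j k) x = (\<Sum>j\<in>J. sc (x ^ j) (F j k))" for k
    by (rule eval_poly_eq_sum) (use assms in auto)
  have "eval_poly (\<lambda>j. eval_poly (\<lambda>k. F j k) z) x = (\<Sum>j\<in>J. sc (x ^ j) (\<Sum>k\<in>K. sc (z ^ k) (F j k)))"
    unfolding inner1 by (rule eval_poly_eq_sum) (use assms in auto)
  also have "\<dots> = (\<Sum>k\<in>K. sc (z ^ k) (\<Sum>j\<in>J. sc (x ^ j) (F j k)))"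
    by (simp add: scale_sum_right mult.commute sum.swap[of _ J])
  also have "\<dots> = eval_poly (\<lambda>k. eval_poly (\<lambda>j. F j k) x) z"
    unfolding inner2 by (rule eval_poly_eq_sum[symmetric]) (use assms in auto)
  finally show ?thesis .
qed

definition eval_poly2 :: "(nat \<Rightarrow> nat \<Rightarrow> 'v) \<Rightarrow> 'f \<Rightarrow> 'f \<Rightarrow> 'v" where
  "eval_poly2 P x y = eval_poly (\<lambda>j. eval_poly (P j) y) x"

lemma eval_poly2_zero [simp]: "eval_poly2 0 x y = 0" "eval_poly2 (\<lambda>j i. 0) x y = 0"
  by (simp_all add: eval_poly2_def zero_fun_def)

lemma RA_eval_poly_coeffs: "RA_lam P \<Longrightarrow> (\<lambda>j. eval_poly (P j) y) \<in> RA"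
  by (rule RA_if_support_subset[of "{j. P j \<noteq> 0}"]) (auto simp: RA_lam_def)

lemma RA_lam_scale [simp]: "RA_lam P \<Longrightarrow> RA_lam (\<lambda>j i. sc c (P j i))"
  by (rule RA_lam_map) simp_all

lemma RA_lam_uminus [simp]: "RA_lam (P :: nat \<Rightarrow> nat \<Rightarrow> 'v) \<Longrightarrow> RA_lam (\<lambda>j i. - P j i)"
  by (rule RA_lam_map[of P uminus]) simp_all

lemma eval_poly2_add:
  "RA_lam P \<Longrightarrow> RA_lam Q \<Longrightarrow> eval_poly2 (\<lambda>j i. P j i + Q j i) x y = eval_poly2 P x y + eval_poly2 Q x y"
  unfolding eval_poly2_def
  by (subst eval_poly_add; auto simp: RA_lam_def intro!: eval_poly_add RA_eval_poly_coeffs)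

lemma eval_poly2_scale: "RA_lam P \<Longrightarrow> eval_poly2 (\<lambda>j i. sc c (P j i)) x y = sc c (eval_poly2 P x y)"
  unfolding eval_poly2_def
  by (subst eval_poly_scale; auto simp: RA_lam_def intro!: eval_poly_scale RA_eval_poly_coeffs)

lemma eval_poly2_uminus: "RA_lam P \<Longrightarrow> eval_poly2 (\<lambda>j i. - P j i) x y = - eval_poly2 P x y"
  unfolding eval_poly2_def
  by (subst eval_poly_uminus; auto simp: RA_lam_def intro!: eval_poly_uminus RA_eval_poly_coeffs)

lemma eval_poly2_sum:
  "finite A \<Longrightarrow> (\<And>s. s \<in> A \<Longrightarrow> RA_lam (G s))
    \<Longrightarrow> eval_poly2 (\<lambda>j i. \<Sum>s\<in>A. G s j i) x y = (\<Sum>s\<in>A. eval_poly2 (G s) x y)"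
  by (induct A rule: finite_induct) (simp_all add: eval_poly2_def eval_poly2_add[unfolded eval_poly2_def])

lemma eval_poly2_shift2:
  assumes "RA_lam P"
  shows "eval_poly2 (shift2 s t P) x y = sc (x ^ s * y ^ t) (eval_poly2 P x y)"
proof -
  have "(\<lambda>j. eval_poly (shift2 s t P j) y) = shift s (\<lambda>j. sc (y ^ t) (eval_poly (P j) y))"
    using assms by (auto simp: shift2_def shift_def RA_lam_def eval_poly_shift fun_eq_iff)
  then show ?thesis
    using assms by (simp add: eval_poly2_def eval_poly_shift eval_poly_scale RA_eval_poly_coeffs mult.commute)
qed

lemma eval_poly2_inj:
  assumes P: "RA_lam P" and Q: "RA_lam Q" and eq: "\<And>x y. eval_poly2 P x y = eval_poly2 Q x y"
  shows "P = Q"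
proof
  fix j
  have "(\<lambda>j. eval_poly (P j) y) = (\<lambda>j. eval_poly (Q j) y)" for y
    by (rule eval_poly_inj) (use P Q eq in \<open>simp_all add: RA_eval_poly_coeffs eval_poly2_def\<close>)
  then show "P j = Q j"
    using P Q by (intro eval_poly_inj) (auto simp: RA_lam_def fun_eq_iff)
qed

definition eval_poly3 :: "(nat \<Rightarrow> nat \<Rightarrow> nat \<Rightarrow> 'v) \<Rightarrow> 'f \<Rightarrow> 'f \<Rightarrow> 'f \<Rightarrow> 'v" where
  "eval_poly3 Q x z y = eval_poly (\<lambda>j. eval_poly2 (Q j) z y) x"

lemma RA_eval_poly2_coeffs: "RA_lam_mu Q \<Longrightarrow> (\<lambda>j. eval_poly2 (Q j) z y) \<in> RA"
  by (rule RA_if_support_subset[of "{j. Q j \<noteq> 0}"]) (auto simp: RA_lam_mu_def eval_poly2_def)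

lemma eval_poly3_add:
  assumes P: "RA_lam_mu P" and Q: "RA_lam_mu Q"
  shows "eval_poly3 (\<lambda>j k. P j k + Q j k) x z y = eval_poly3 P x z y + eval_poly3 Q x z y"
proof -
  have "eval_poly2 (\<lambda>k. P j k + Q j k) z y = eval_poly2 (P j) z y + eval_poly2 (Q j) z y" for j
    using eval_poly2_add[of "P j" "Q j"] P Q by (simp add: RA_lam_mu_def plus_fun_def)
  then show ?thesis
    unfolding eval_poly3_def using P Q by (simp add: eval_poly_add RA_eval_poly2_coeffs)
qed

lemma eval_poly3_transpose:
  assumes "RA_lam_mu Q"
  shows "eval_poly3 (\<lambda>j k. Q k j) x z y = eval_poly3 Q z x y"
proof -
  define K where "K = {k. Q k \<noteq> 0}"
  define J where "J = (\<Union>k\<in>K. {j. Q k j \<noteq> 0})"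
  have "finite K" "finite J"
    using assms by (auto simp: RA_lam_mu_def RA_lam_def K_def J_def)
  moreover have "eval_poly (Q k j) y = 0" if "j \<notin> J \<or> k \<notin> K" for j k
    using that by (auto simp: J_def K_def) (metis eval_poly_zero(1) zero_fun_apply)
  ultimately have "eval_poly (\<lambda>j. eval_poly (\<lambda>k. eval_poly (Q k j) y) z) x
      = eval_poly (\<lambda>k. eval_poly (\<lambda>j. eval_poly (Q k j) y) x) z"
    by (intro eval_poly_swap[of J K]) auto
  then show ?thesis by (simp add: eval_poly3_def eval_poly2_def)
qed

lemma eval_poly3_inj:
  assumes P: "RA_lam_mu P" and Q: "RA_lam_mu Q" and eq: "\<And>x z y. eval_poly3 P x z y = eval_poly3 Q x z y"
  shows "P = Q"
proof
  fix j
  have "(\<lambda>j. eval_poly2 (P j) z y) = (\<lambda>j. eval_poly2 (Q j) z y)" for z y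
    by (rule eval_poly_inj) (use P Q eq in \<open>simp_all add: RA_eval_poly2_coeffs eval_poly3_def\<close>)
  then show "P j = Q j"
    using P Q by (intro eval_poly2_inj) (auto simp: RA_lam_mu_def fun_eq_iff)
qed

lemma sum_binomial_convolution:
  assumes w: "\<And>p r. N \<le> p \<or> N \<le> r \<Longrightarrow> w p r = 0"
  shows "(\<Sum>j<2*N. sc (x ^ j) (\<Sum>k<N. sc (z ^ k)
            (\<Sum>p\<le>j. sc (of_nat ((k + j - p) choose (j - p))) (w p (k + j - p)))))
       = (\<Sum>p<N. sc (x ^ p) (\<Sum>r<N. sc ((x + z) ^ r) (w p r)))"
proof -
  define H where "H p t k = sc (of_nat ((k + t) choose t) * x ^ (p + t) * z ^ k) (w p (k + t))" for p t k
  have triangle: "finite {(p, t). p + t < (n::nat)}" for n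
    by (rule finite_subset[of _ "{..<n} \<times> {..<n}"]) auto
  have H0: "H p t k = 0" if "N \<le> p \<or> \<not> t + k < N" for p t k
    using that by (auto simp: H_def intro!: w)
  have "(\<Sum>j<2*N. sc (x ^ j) (\<Sum>k<N. sc (z ^ k)
            (\<Sum>p\<le>j. sc (of_nat ((k + j - p) choose (j - p))) (w p (k + j - p)))))
      = (\<Sum>j<2*N. \<Sum>p\<le>j. \<Sum>k<N. H p (j - p) k)"
    by (simp add: H_def scale_sum_right mult_ac sum.swap[of _ "{..<N}"])
  also have "\<dots> = (\<Sum>(p,t)\<in>{(p,t). p + t < 2*N}. \<Sum>k<N. H p t k)"
    by (subst sum.triangle_reindex) simp
  also have "\<dots> = (\<Sum>(p,t)\<in>{..<N} \<times> {..<N}. \<Sum>k<N. H p t k)"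
    by (rule sum.mono_neutral_right) (auto simp: triangle intro!: sum.neutral H0)
  finally have lhs: "(\<Sum>j<2*N. sc (x ^ j) (\<Sum>k<N. sc (z ^ k)
            (\<Sum>p\<le>j. sc (of_nat ((k + j - p) choose (j - p))) (w p (k + j - p)))))
      = (\<Sum>p<N. \<Sum>t<N. \<Sum>k<N. H p t k)"
    by (simp add: sum.cartesian_product[symmetric])
  have "(\<Sum>p<N. sc (x ^ p) (\<Sum>r<N. sc ((x + z) ^ r) (w p r)))
      = (\<Sum>p<N. \<Sum>r<N. \<Sum>t\<le>r. H p t (r - t))"
    by (simp add: H_def scale_sum_right binomial_ring scale_sum_left power_add mult_ac)
  also have "\<dots> = (\<Sum>p<N. \<Sum>(t,k)\<in>{(t,k). t + k < N}. H p t k)"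
    by (subst sum.triangle_reindex) simp
  also have "\<dots> = (\<Sum>p<N. \<Sum>(t,k)\<in>{..<N} \<times> {..<N}. H p t k)"
    by (rule sum.cong[OF refl], rule sum.mono_neutral_left) (auto, metis H0)
  finally show ?thesis
    unfolding lhs by (simp add: sum.cartesian_product[symmetric])
qed

text \<open>The coefficient form of \<open>\<Sum>\<^sub>p \<lambda>\<^sup>p \<Sum>\<^sub>r (\<lambda>+\<mu>)\<^sup>r w\<^sub>p\<^sub>r\<close>, as it appears in \<open>hom_lie_conformal\<close>.\<close>
lemma eval_poly_binomial_convolution:
  assumes w: "\<And>p r. N \<le> p \<or> N \<le> r \<Longrightarrow> w p r = 0"
  shows "eval_poly (\<lambda>j. eval_poly (\<lambda>k. \<Sum>p\<le>j. sc (of_nat ((k + j - p) choose (j - p))) (w p (k + j - p))) z) x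
       = eval_poly (\<lambda>p. eval_poly (w p) (x + z)) x"
proof -
  have vanish: "w p (k + j - p) = 0" if "p \<le> j" "N \<le> k \<or> 2 * N \<le> j" for j k p
    using that by (intro w) linarith
  have inner: "eval_poly (\<lambda>k. \<Sum>p\<le>j. sc (of_nat ((k + j - p) choose (j - p))) (w p (k + j - p))) z
      = (\<Sum>k<N. sc (z ^ k) (\<Sum>p\<le>j. sc (of_nat ((k + j - p) choose (j - p))) (w p (k + j - p))))" for j
    by (rule eval_poly_eq_sum) (auto simp: vanish)
  have "w p = 0" if "N \<le> p" for p
    using that by (simp add: w fun_eq_iff)
  then have outer: "eval_poly (w p) (x + z) = 0" if "N \<le> p" for p
    using that by simp
  have "eval_poly (\<lambda>j. eval_poly (\<lambda>k. \<Sum>p\<le>j. sc (of_nat ((k + j - p) choose (j - p))) (w p (k + j - p))) z) x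
      = (\<Sum>j<2*N. sc (x ^ j) (\<Sum>k<N. sc (z ^ k)
            (\<Sum>p\<le>j. sc (of_nat ((k + j - p) choose (j - p))) (w p (k + j - p)))))"
    unfolding inner by (rule eval_poly_eq_sum) (auto simp: vanish)
  also have "\<dots> = (\<Sum>p<N. sc (x ^ p) (\<Sum>r<N. sc ((x + z) ^ r) (w p r)))"
    by (rule sum_binomial_convolution[OF w])
  also have "\<dots> = eval_poly (\<lambda>p. eval_poly (w p) (x + z)) x"
    by (subst (1 2) eval_poly_eq_sum[of "{..<N}"]) (auto simp: w outer)
  finally show ?thesis .
qed

end

section \<open>The \<open>\<lambda>\<close>-bracket on \<open>R\<^sub>A\<close> through its values\<close>

locale GD_setting = char0_vector_space sc
  for sc :: "complex \<Rightarrow> 'a::ab_group_add \<Rightarrow> 'a" +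
  fixes br circ :: "'a \<Rightarrow> 'a \<Rightarrow> 'a" and \<alpha> :: "'a \<Rightarrow> 'a"
  assumes linear_alpha: "Vector_Spaces.linear sc sc \<alpha>"
    and bilinear_br: "cbilinear sc br" and bilinear_circ: "cbilinear sc circ"
begin

lemma linear_br_left: "Vector_Spaces.linear sc sc (\<lambda>x. br x y)"
  and linear_br_right: "Vector_Spaces.linear sc sc (br x)"
  and linear_circ_left: "Vector_Spaces.linear sc sc (\<lambda>x. circ x y)"
  and linear_circ_right: "Vector_Spaces.linear sc sc (circ x)"
  using bilinear_br bilinear_circ unfolding cbilinear_def by auto

lemmas alpha_simps [simp] = linear_simps[OF linear_alpha]
lemmas br_left_simps [simp] = linear_simps[OF linear_br_left]
lemmas br_right_simps [simp] = linear_simps[OF linear_br_right]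
lemmas circ_left_simps [simp] = linear_simps[OF linear_circ_left]
lemmas circ_right_simps [simp] = linear_simps[OF linear_circ_right]

abbreviation bracket :: "(nat \<Rightarrow> 'a) \<Rightarrow> (nat \<Rightarrow> 'a) \<Rightarrow> nat \<Rightarrow> nat \<Rightarrow> 'a" where
  "bracket \<equiv> RA_bracket sc br circ"

text \<open>The \<open>\<Phi>\<close> above: the polynomial \<open>[u\<^sub>\<lambda> v]\<close> evaluated at \<open>\<lambda> = x\<close>, \<open>\<partial> = y\<close>.\<close>
definition lam_symbol :: "'a \<Rightarrow> 'a \<Rightarrow> complex \<Rightarrow> complex \<Rightarrow> 'a" where
  "lam_symbol u v x y = br v u + sc y (circ v u) + sc x (circ v u + circ u v)"

lemma linear_lam_symbol_left: "Vector_Spaces.linear sc sc (\<lambda>u. lam_symbol u v x y)"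
  and linear_lam_symbol_right: "Vector_Spaces.linear sc sc (\<lambda>v. lam_symbol u v x y)"
  unfolding Vector_Spaces.linear_iff using vector_space_axioms
  by (auto simp: lam_symbol_def algebra_simps)

lemmas lam_symbol_left_simps = linear_simps[OF linear_lam_symbol_left]
lemmas lam_symbol_right_simps = linear_simps[OF linear_lam_symbol_right]

lemma RA_lam_gen_bracket [simp]: "RA_lam (gen_bracket br circ u v)"
proof (rule RA_lam_if_support_subset[of "{0,1}"])
  show "gen_bracket br circ u v j \<in> RA" for j
    by (rule RA_if_support_subset[of "{0,1}"]) (auto simp: gen_bracket_def)
qed (auto simp: gen_bracket_def fun_eq_iff)

lemma eval_poly2_gen_bracket: "eval_poly2 (gen_bracket br circ u v) x y = lam_symbol u v x y"
proof -
  have "eval_poly (gen_bracket br circ u v 0) y = br v u + sc y (circ v u)"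
    by (subst eval_poly_eq_sum[of "{0,1}"]) (simp_all add: gen_bracket_def)
  moreover have "eval_poly (gen_bracket br circ u v 1) y = circ v u + circ u v"
    by (subst eval_poly_eq_sum[of "{0}"]) (simp_all add: gen_bracket_def)
  moreover have "gen_bracket br circ u v j = (\<lambda>i. 0)" if "j \<notin> {0,1}" for j
    using that by (simp add: gen_bracket_def fun_eq_iff)
  ultimately show ?thesis
    unfolding eval_poly2_def
    by (subst eval_poly_eq_sum[of "{0,1}"]) (simp_all add: lam_symbol_def)
qed

lemma neg_lam_pow_eq_shift2: "neg_lam_pow sc p P = (\<lambda>j i. sc ((-1) ^ p) (shift2 p 0 P j i))"
  by (auto simp: neg_lam_pow_def shift2_def shift_def)

lemma dlam_pow_eq_shift2:
  "dlam_pow sc q P = (\<lambda>j i. \<Sum>s\<le>q. sc (of_nat (q choose s)) (shift2 s (q - s) P j i))"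
  by (auto simp: dlam_pow_def shift2_def shift_def fun_eq_iff intro!: sum.cong)

lemma RA_lam_neg_lam_pow [simp]: "RA_lam P \<Longrightarrow> RA_lam (neg_lam_pow sc p P)"
  by (simp add: neg_lam_pow_eq_shift2)

lemma RA_lam_dlam_pow [simp]: "RA_lam P \<Longrightarrow> RA_lam (dlam_pow sc q P)"
  by (simp add: dlam_pow_eq_shift2)

lemma eval_poly2_neg_lam_pow:
  "RA_lam P \<Longrightarrow> eval_poly2 (neg_lam_pow sc p P) x y = sc ((- x) ^ p) (eval_poly2 P x y)"
  by (simp add: neg_lam_pow_eq_shift2 eval_poly2_scale eval_poly2_shift2 power_minus[of x p])

lemma eval_poly2_dlam_pow:
  "RA_lam P \<Longrightarrow> eval_poly2 (dlam_pow sc q P) x y = sc ((x + y) ^ q) (eval_poly2 P x y)"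
  by (simp add: dlam_pow_eq_shift2 eval_poly2_sum eval_poly2_scale eval_poly2_shift2
      binomial_ring scale_sum_left mult.assoc)

definition bracket_term :: "(nat \<Rightarrow> 'a) \<Rightarrow> (nat \<Rightarrow> 'a) \<Rightarrow> nat \<Rightarrow> nat \<Rightarrow> nat \<Rightarrow> nat \<Rightarrow> 'a" where
  "bracket_term a b p q = neg_lam_pow sc p (dlam_pow sc q (gen_bracket br circ (a p) (b q)))"

lemma RA_lam_bracket_term [simp]: "RA_lam (bracket_term a b p q)"
  by (simp add: bracket_term_def)

lemma eval_poly2_bracket_term:
  "eval_poly2 (bracket_term a b p q) x y = sc ((- x) ^ p * (x + y) ^ q) (lam_symbol (a p) (b q) x y)"
  by (simp add: bracket_term_def eval_poly2_neg_lam_pow eval_poly2_dlam_pow eval_poly2_gen_bracket)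

lemma bracket_term_eq_0:
  "a p = 0 \<or> b q = 0 \<or> j < p \<or> i + j < q \<Longrightarrow> bracket_term a b p q j i = 0"
  by (auto simp: bracket_term_def neg_lam_pow_def dlam_pow_def gen_bracket_def intro!: sum.neutral)

lemma RA_bracket_eq_sum:
  assumes "\<And>p. Na \<le> p \<Longrightarrow> a p = 0" and "\<And>q. Nb \<le> q \<Longrightarrow> b q = 0"
  shows "bracket a b = (\<lambda>j i. \<Sum>p<Na. \<Sum>q<Nb. bracket_term a b p q j i)"
proof (intro ext)
  fix j i
  have inner: "(\<Sum>q\<le>i + j. bracket_term a b p q j i) = (\<Sum>q<Nb. bracket_term a b p q j i)" for p
    by (rule sum.mono_neutral_cong) (use assms(2) in \<open>auto intro: bracket_term_eq_0\<close>)
  have "bracket a b j i = (\<Sum>p\<le>j. \<Sum>q\<le>i + j. bracket_term a b p q j i)"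
    by (simp add: RA_bracket_def bracket_term_def)
  also have "\<dots> = (\<Sum>p\<le>j. \<Sum>q<Nb. bracket_term a b p q j i)"
    by (simp add: inner)
  also have "\<dots> = (\<Sum>p<Na. \<Sum>q<Nb. bracket_term a b p q j i)"
    by (rule sum.mono_neutral_cong) (use assms(1) in \<open>auto intro!: sum.neutral bracket_term_eq_0\<close>)
  finally show "bracket a b j i = (\<Sum>p<Na. \<Sum>q<Nb. bracket_term a b p q j i)" .
qed

lemma RA_lam_bracket [simp]:
  assumes "a \<in> RA" "b \<in> RA"
  shows "RA_lam (bracket a b)"
proof -
  obtain Na Nb where a: "\<And>p. Na \<le> p \<Longrightarrow> a p = 0" and b: "\<And>q. Nb \<le> q \<Longrightarrow> b q = 0"
    using assms by (metis RA_eventually_zero)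
  show ?thesis by (simp add: RA_bracket_eq_sum[OF a b])
qed

lemma bracket_in_RA [simp]: "a \<in> RA \<Longrightarrow> b \<in> RA \<Longrightarrow> bracket a b j \<in> RA"
  using RA_lam_bracket unfolding RA_lam_def by blast

lemma finite_bracket_support: "a \<in> RA \<Longrightarrow> b \<in> RA \<Longrightarrow> finite {j. bracket a b j \<noteq> 0}"
  using RA_lam_bracket unfolding RA_lam_def by blast

lemma eval_poly2_bracket:
  assumes "a \<in> RA" "b \<in> RA"
  shows "eval_poly2 (bracket a b) x y = lam_symbol (eval_poly a (- x)) (eval_poly b (y + x)) x y"
proof -
  obtain Na Nb where a: "\<And>p. Na \<le> p \<Longrightarrow> a p = 0" and b: "\<And>q. Nb \<le> q \<Longrightarrow> b q = 0"
    using assms by (metis RA_eventually_zero)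
  have "eval_poly a (- x) = (\<Sum>p<Na. sc ((- x) ^ p) (a p))"
    by (rule eval_poly_eq_sum) (use a in auto)
  moreover have "eval_poly b (y + x) = (\<Sum>q<Nb. sc ((x + y) ^ q) (b q))"
    by (subst eval_poly_eq_sum[of "{..<Nb}"]) (use b in \<open>auto simp: add.commute\<close>)
  moreover have "eval_poly2 (bracket a b) x y
      = (\<Sum>p<Na. \<Sum>q<Nb. sc ((- x) ^ p * (x + y) ^ q) (lam_symbol (a p) (b q) x y))"
    by (simp add: RA_bracket_eq_sum[OF a b] eval_poly2_sum eval_poly2_bracket_term)
  ultimately show ?thesis
    by (simp add: lam_symbol_left_simps lam_symbol_right_simps scale_sum_right mult.commute sum.swap[of _ "{..<Nb}"])
qed

section \<open>Bilinearity and sesquilinearity\<close>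

lemma RA_alpha_in_RA [simp]: "a \<in> RA \<Longrightarrow> RA_alpha \<alpha> a \<in> RA"
  by (simp add: RA_alpha_def RA_map)

lemma RA_scale_in_RA [simp]: "a \<in> RA \<Longrightarrow> RA_scale sc c a \<in> RA"
  by (simp add: RA_scale_def)

lemma RA_scale_zero [simp]: "RA_scale sc c 0 = 0"
  by (simp add: RA_scale_def zero_fun_def)

lemma eval_poly_RA_D: "a \<in> RA \<Longrightarrow> eval_poly (RA_D a) y = sc y (eval_poly a y)"
  by (simp add: RA_D_eq_shift eval_poly_shift)

lemma eval_poly_RA_alpha: "a \<in> RA \<Longrightarrow> eval_poly (RA_alpha \<alpha> a) y = \<alpha> (eval_poly a y)"
  unfolding RA_alpha_def by (rule eval_poly_linear[OF linear_alpha])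

lemma eval_poly_RA_scale: "a \<in> RA \<Longrightarrow> eval_poly (RA_scale sc c a) y = sc c (eval_poly a y)"
  unfolding RA_scale_def by (rule eval_poly_scale)

lemma vector_space_RA_scale: "vector_space (RA_scale sc)"
  unfolding vector_space_def RA_scale_def by (simp add: fun_eq_iff scale_right_distrib scale_left_distrib)

lemma RA_D_add: "RA_D (a + b) = RA_D a + RA_D b"
  and RA_alpha_add: "RA_alpha \<alpha> (a + b) = RA_alpha \<alpha> a + RA_alpha \<alpha> b"
  and RA_D_RA_scale: "RA_D (RA_scale sc c a) = RA_scale sc c (RA_D a)"
  and RA_alpha_RA_scale: "RA_alpha \<alpha> (RA_scale sc c a) = RA_scale sc c (RA_alpha \<alpha> a)"
  and RA_alpha_RA_D: "RA_alpha \<alpha> (RA_D a) = RA_D (RA_alpha \<alpha> a)"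
  by (simp_all add: RA_D_def RA_alpha_def RA_scale_def fun_eq_iff)

lemma bracket_add_left:
  assumes "a \<in> RA" "b \<in> RA" "c \<in> RA"
  shows "bracket (a + b) c j = bracket a c j + bracket b c j"
proof -
  have "bracket (a + b) c = (\<lambda>j i. bracket a c j i + bracket b c j i)"
    by (rule eval_poly2_inj) (use assms in \<open>simp_all add: eval_poly2_bracket eval_poly2_add
        plus_fun_def eval_poly_add lam_symbol_left_simps\<close>)
  then show ?thesis by (simp add: fun_eq_iff)
qed

lemma bracket_add_right:
  assumes "a \<in> RA" "b \<in> RA" "c \<in> RA"
  shows "bracket c (a + b) j = bracket c a j + bracket c b j"
proof -
  have "bracket c (a + b) = (\<lambda>j i. bracket c a j i + bracket c b j i)"
    by (rule eval_poly2_inj) (use assms in \<open>simp_all add: eval_poly2_bracket eval_poly2_add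
        plus_fun_def eval_poly_add lam_symbol_right_simps\<close>)
  then show ?thesis by (simp add: fun_eq_iff)
qed

lemma bracket_scale_left:
  assumes "a \<in> RA" "b \<in> RA"
  shows "bracket (RA_scale sc z a) b j = RA_scale sc z (bracket a b j)"
proof -
  have "bracket (RA_scale sc z a) b = (\<lambda>j i. sc z (bracket a b j i))"
    by (rule eval_poly2_inj) (use assms in \<open>simp_all add: eval_poly2_bracket eval_poly2_scale
        eval_poly_RA_scale lam_symbol_left_simps\<close>)
  then show ?thesis by (simp add: fun_eq_iff RA_scale_def)
qed

lemma bracket_scale_right:
  assumes "a \<in> RA" "b \<in> RA"
  shows "bracket a (RA_scale sc z b) j = RA_scale sc z (bracket a b j)"
proof -
  have "bracket a (RA_scale sc z b) = (\<lambda>j i. sc z (bracket a b j i))"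
    by (rule eval_poly2_inj) (use assms in \<open>simp_all add: eval_poly2_bracket eval_poly2_scale
        eval_poly_RA_scale lam_symbol_right_simps\<close>)
  then show ?thesis by (simp add: fun_eq_iff RA_scale_def)
qed

lemma bracket_zero_left [simp]: "b \<in> RA \<Longrightarrow> bracket 0 b = 0"
  by (rule eval_poly2_inj) (simp_all add: eval_poly2_bracket lam_symbol_left_simps zero_fun_def)

lemma bracket_zero_right [simp]: "a \<in> RA \<Longrightarrow> bracket a 0 = 0"
  by (rule eval_poly2_inj) (simp_all add: eval_poly2_bracket lam_symbol_right_simps zero_fun_def)

lemma bracket_RA_D_left:
  assumes "a \<in> RA" "b \<in> RA"
  shows "bracket (RA_D a) b j = (if j = 0 then 0 else - bracket a b (j - 1))"
proof -
  have "bracket (RA_D a) b = shift2 1 0 (\<lambda>j i. - bracket a b j i)"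
    by (rule eval_poly2_inj) (use assms in \<open>simp_all add: eval_poly2_bracket eval_poly2_shift2
        eval_poly2_uminus eval_poly_RA_D lam_symbol_left_simps\<close>)
  then show ?thesis by (auto simp: shift2_apply fun_eq_iff)
qed

lemma bracket_RA_emb: "bracket (RA_emb u) (RA_emb v) = gen_bracket br circ u v"
  by (rule eval_poly2_inj) (simp_all add: eval_poly2_bracket eval_poly2_gen_bracket)

lemma RA_degree_2_bracket: "RA_degree 2 bracket"
  unfolding RA_degree_def
proof (intro allI)
  fix u v :: 'a
  show "\<exists>w. \<forall>j. bracket (RA_emb u) (RA_emb v) j = (\<lambda>i. if i + j < 2 then w i j else 0)"
    by (rule exI[of _ "\<lambda>i j. gen_bracket br circ u v j i"])
      (auto simp: bracket_RA_emb gen_bracket_def fun_eq_iff)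
qed

section \<open>Skew-symmetry\<close>

text \<open>For \<open>Q = [b\<^sub>\<lambda> a]\<close> this is \<open>-[b\<^bsub>-\<lambda>-\<partial>\<^esub> a]\<close>, written as in \<open>hom_lie_conformal\<close>.\<close>
definition skew_transform :: "(nat \<Rightarrow> nat \<Rightarrow> 'a) \<Rightarrow> nat \<Rightarrow> nat \<Rightarrow> 'a" where
  "skew_transform Q k = - (\<Sum>j\<in>{j. Q j \<noteq> 0}.
     RA_scale sc ((-1) ^ j * of_nat (j choose k)) ((RA_D ^^ (j - k)) (Q j)))"

lemma skew_transform_apply:
  "skew_transform Q k = (\<lambda>i. - (\<Sum>j\<in>{j. Q j \<noteq> 0}. sc ((-1) ^ j * of_nat (j choose k)) (shift (j - k) (Q j) i)))"
  by (simp add: skew_transform_def sum_fun_apply RA_scale_def RA_D_funpow fun_eq_iff)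

lemma skew_transform_eq_0: "{j. Q j \<noteq> 0} \<subseteq> {..<M} \<Longrightarrow> M \<le> k \<Longrightarrow> skew_transform Q k = 0"
  by (auto simp: skew_transform_apply fun_eq_iff intro!: sum.neutral)

lemma RA_lam_skew_transform:
  assumes Q: "RA_lam Q"
  shows "RA_lam (skew_transform Q)"
proof -
  obtain M where M: "{j. Q j \<noteq> 0} \<subseteq> {..<M}"
    using Q finite_nat_iff_bounded unfolding RA_lam_def by blast
  then have "skew_transform Q k = 0" if "M \<le> k" for k
    using that by (rule skew_transform_eq_0)
  moreover have "skew_transform Q k \<in> RA" for k
    using Q unfolding skew_transform_apply RA_lam_def by simp
  ultimately show ?thesis
    by (intro RA_lam_if_support_subset[of "{..<M}"]) auto
qed

lemma eval_poly2_skew_transform: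
  assumes Q: "RA_lam Q"
  shows "eval_poly2 (skew_transform Q) x y = - eval_poly2 Q (- x - y) y"
proof -
  define J where "J = {j. Q j \<noteq> 0}"
  obtain M where M: "J \<subseteq> {..<M}"
    using Q finite_nat_iff_bounded unfolding RA_lam_def J_def by blast
  have J: "finite J" and QRA: "\<And>j. Q j \<in> RA"
    using Q by (simp_all add: RA_lam_def J_def)
  define V where "V j = eval_poly (Q j) y" for j
  have coeff: "eval_poly (skew_transform Q k) y
      = - (\<Sum>j\<in>J. sc ((-1) ^ j * of_nat (j choose k) * y ^ (j - k)) (V j))" for k
    unfolding skew_transform_apply J_def[symmetric] V_def
    using QRA J by (simp add: eval_poly_uminus eval_poly_sum eval_poly_scale eval_poly_shift)
  have binomial: "(\<Sum>k<M. x ^ k * ((-1) ^ j * of_nat (j choose k) * y ^ (j - k))) = (- x - y) ^ j"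
    if "j \<in> J" for j
  proof -
    have "(\<Sum>k<M. x ^ k * ((-1) ^ j * of_nat (j choose k) * y ^ (j - k)))
        = (-1) ^ j * (\<Sum>k\<le>j. of_nat (j choose k) * x ^ k * y ^ (j - k))"
      using M that by (subst sum.mono_neutral_cong[of "{..<M}" "{..j}"])
        (auto simp: sum_distrib_left algebra_simps)
    also have "\<dots> = (-1) ^ j * (x + y) ^ j"
      by (simp add: binomial_ring)
    also have "\<dots> = (- x - y) ^ j"
      by (simp add: power_mult_distrib[symmetric])
    finally show ?thesis .
  qed
  have "eval_poly2 (skew_transform Q) x y = (\<Sum>k<M. sc (x ^ k) (eval_poly (skew_transform Q k) y))"
    unfolding eval_poly2_def using M
    by (intro eval_poly_eq_sum) (auto simp: skew_transform_eq_0 J_def)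
  also have "\<dots> = - (\<Sum>j\<in>J. sc (\<Sum>k<M. x ^ k * ((-1) ^ j * of_nat (j choose k) * y ^ (j - k))) (V j))"
    by (simp add: coeff scale_sum_right scale_sum_left sum_negf sum.swap[of _ "{..<M}"])
  also have "\<dots> = - eval_poly2 Q (- x - y) y"
    unfolding eval_poly2_def V_def using J
    by (subst eval_poly_eq_sum[of J]) (simp_all add: binomial J_def)
  finally show ?thesis .
qed

lemma lam_symbol_skew_iff:
  "(\<forall>u v x y. lam_symbol u v x y = - lam_symbol v u (- x - y) y) \<longleftrightarrow> (\<forall>u v. br u v = - br v u)"
proof
  assume "\<forall>u v x y. lam_symbol u v x y = - lam_symbol v u (- x - y) y"
  then show "\<forall>u v. br u v = - br v u"
    by (metis (no_types, lifting) add.right_neutral diff_zero lam_symbol_def minus_zero scale_zero_left)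
next
  assume "\<forall>u v. br u v = - br v u"
  then have "br v u + br u v = 0" for u v by (metis add.left_inverse)
  moreover have "lam_symbol u v x y + lam_symbol v u (- x - y) y = br v u + br u v" for u v x y
    by (simp add: lam_symbol_def algebra_simps)
  ultimately show "\<forall>u v x y. lam_symbol u v x y = - lam_symbol v u (- x - y) y"
    by (simp add: eq_neg_iff_add_eq_0)
qed

lemma conformal_skew_iff:
  "(\<forall>a\<in>RA. \<forall>b\<in>RA. \<forall>k. bracket a b k = - (\<Sum>j\<in>{j. bracket b a j \<noteq> 0}.
       RA_scale sc ((-1) ^ j * of_nat (j choose k)) ((RA_D ^^ (j - k)) (bracket b a j))))
   \<longleftrightarrow> (\<forall>u v. br u v = - br v u)"
proof -
  have "(\<forall>a\<in>RA. \<forall>b\<in>RA. bracket a b = skew_transform (bracket b a))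
      \<longleftrightarrow> (\<forall>u v x y. lam_symbol u v x y = - lam_symbol v u (- x - y) y)"
  proof
    assume skew: "\<forall>a\<in>RA. \<forall>b\<in>RA. bracket a b = skew_transform (bracket b a)"
    show "\<forall>u v x y. lam_symbol u v x y = - lam_symbol v u (- x - y) y"
    proof (intro allI)
      fix u v x y
      have "bracket (RA_emb u) (RA_emb v) = skew_transform (bracket (RA_emb v) (RA_emb u))"
        using skew RA_emb_in_RA by blast
      then have "eval_poly2 (bracket (RA_emb u) (RA_emb v)) x y
          = eval_poly2 (skew_transform (bracket (RA_emb v) (RA_emb u))) x y"
        by simp
      then show "lam_symbol u v x y = - lam_symbol v u (- x - y) y"
        by (simp add: eval_poly2_skew_transform eval_poly2_bracket)
    qed
  next
    assume skew: "\<forall>u v x y. lam_symbol u v x y = - lam_symbol v u (- x - y) y"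
    show "\<forall>a\<in>RA. \<forall>b\<in>RA. bracket a b = skew_transform (bracket b a)"
    proof (intro ballI eval_poly2_inj)
      fix a b :: "nat \<Rightarrow> 'a" and x y :: complex
      assume "a \<in> RA" "b \<in> RA"
      moreover have "- (- x - y) = y + x" by simp
      moreover have "y + (- x - y) = - x" by simp
      ultimately show "RA_lam (bracket a b)" "RA_lam (skew_transform (bracket b a))"
        and "eval_poly2 (bracket a b) x y = eval_poly2 (skew_transform (bracket b a)) x y"
        using skew[rule_format, of "eval_poly a (- x)" "eval_poly b (y + x)" x y]
        by (simp_all only: RA_lam_bracket RA_lam_skew_transform eval_poly2_skew_transform
            eval_poly2_bracket)
    qed
  qed
  then show ?thesis
    by (simp add: skew_transform_def fun_eq_iff lam_symbol_skew_iff)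
qed

section \<open>The Hom-Jacobi identity\<close>

text \<open>\<open>[d\<^sub>\<lambda> [b\<^sub>\<mu> c]]\<close>, with \<open>k\<close> the exponent of \<open>\<mu>\<close> and \<open>j\<close> that of \<open>\<lambda>\<close>.\<close>
definition right_nested :: "(nat \<Rightarrow> 'a) \<Rightarrow> (nat \<Rightarrow> 'a) \<Rightarrow> (nat \<Rightarrow> 'a) \<Rightarrow> nat \<Rightarrow> nat \<Rightarrow> nat \<Rightarrow> 'a" where
  "right_nested d b c k j = bracket d (bracket b c k) j"

text \<open>\<open>[[a\<^sub>\<lambda> b]\<^bsub>\<lambda>+\<mu>\<^esub> c]\<close>, with \<open>j\<close> the exponent of \<open>\<lambda>\<close> and \<open>k\<close> that of \<open>\<mu>\<close>.\<close>
definition left_nested :: "(nat \<Rightarrow> 'a) \<Rightarrow> (nat \<Rightarrow> 'a) \<Rightarrow> (nat \<Rightarrow> 'a) \<Rightarrow> nat \<Rightarrow> nat \<Rightarrow> nat \<Rightarrow> 'a" where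
  "left_nested a b c j k =
     (\<Sum>p\<le>j. RA_scale sc (of_nat ((k + j - p) choose (j - p))) (bracket (bracket a b p) c (k + j - p)))"

lemma RA_lam_mu_right_nested:
  assumes "d \<in> RA" "b \<in> RA" "c \<in> RA"
  shows "RA_lam_mu (right_nested d b c)"
  unfolding RA_lam_mu_def
proof
  have "right_nested d b c k = 0" if "bracket b c k = 0" for k
    using that assms(1) by (simp add: right_nested_def[abs_def])
  then have "{k. right_nested d b c k \<noteq> 0} \<subseteq> {k. bracket b c k \<noteq> 0}"
    by blast
  then show "finite {k. right_nested d b c k \<noteq> 0}"
    using finite_bracket_support[OF assms(2,3)] by (rule finite_subset)
  show "\<forall>k. RA_lam (right_nested d b c k)"
    using assms by (simp add: right_nested_def[abs_def])
qed

lemma eval_poly3_right_nested: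
  assumes "d \<in> RA" "b \<in> RA" "c \<in> RA"
  shows "eval_poly3 (right_nested d b c) x z y
    = lam_symbol (eval_poly d (- z)) (lam_symbol (eval_poly b (- x)) (eval_poly c (y + z + x)) x (y + z)) z y"
proof -
  have "eval_poly3 (right_nested d b c) x z y
      = eval_poly (\<lambda>k. lam_symbol (eval_poly d (- z)) (eval_poly (bracket b c k) (y + z)) z y) x"
    using assms by (simp add: eval_poly3_def right_nested_def[abs_def] eval_poly2_bracket)
  also have "\<dots> = lam_symbol (eval_poly d (- z)) (eval_poly2 (bracket b c) x (y + z)) z y"
    unfolding eval_poly2_def using assms
    by (intro eval_poly_linear[OF linear_lam_symbol_right] RA_eval_poly_coeffs) simp
  finally show ?thesis
    using assms by (simp add: eval_poly2_bracket)
qed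

lemma left_nested_support_bound:
  assumes "a \<in> RA" "b \<in> RA" "c \<in> RA"
  obtains N where "\<And>p r. N \<le> p \<or> N \<le> r \<Longrightarrow> bracket (bracket a b p) c r = 0"
proof -
  define P where "P = {p. bracket a b p \<noteq> 0}"
  define R where "R = (\<Union>p\<in>P. {r. bracket (bracket a b p) c r \<noteq> 0})"
  have "finite (P \<union> R)"
    using assms by (auto simp: P_def R_def finite_bracket_support)
  then obtain N where N: "P \<union> R \<subseteq> {..<N}"
    using finite_nat_iff_bounded by blast
  have "bracket (bracket a b p) c r = 0" if "N \<le> p \<or> N \<le> r" for p r
  proof (cases "p \<in> P")
    case False
    then show ?thesis using assms(3) by (simp add: P_def)
  next
    case True
    then show ?thesis using that N by (auto simp: R_def)
  qed
  then show ?thesis by (rule that)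
qed

lemma RA_lam_mu_left_nested:
  assumes "a \<in> RA" "b \<in> RA" "c \<in> RA"
  shows "RA_lam_mu (left_nested a b c)"
proof -
  obtain N where N: "\<And>p r. N \<le> p \<or> N \<le> r \<Longrightarrow> bracket (bracket a b p) c r = 0"
    using left_nested_support_bound[OF assms] by blast
  have "bracket (bracket a b p) c (k + j - p) = 0" if "p \<le> j" "2 * N \<le> j \<or> N \<le> k" for j k p
    using that by (intro N) linarith
  then have "left_nested a b c j k = 0" if "j \<notin> {..<2 * N} \<or> k \<notin> {..<N}" for j k
    using that by (auto simp: left_nested_def intro!: sum.neutral)
  moreover have "left_nested a b c j k \<in> RA" for j k
    using assms by (simp add: left_nested_def RA_scale_def sum_fun_apply[abs_def])
  ultimately show ?thesis
    by (intro RA_lam_mu_if_support_subset[of "{..<2 * N}" "{..<N}"]) auto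
qed

lemma eval_poly3_left_nested:
  assumes "a \<in> RA" "b \<in> RA" "c \<in> RA"
  shows "eval_poly3 (left_nested a b c) x z y
    = lam_symbol (lam_symbol (eval_poly a (- x)) (eval_poly b (- z)) x (- (x + z)))
        (eval_poly c (y + (x + z))) (x + z) y"
proof -
  obtain N where N: "\<And>p r. N \<le> p \<or> N \<le> r \<Longrightarrow> bracket (bracket a b p) c r = 0"
    using left_nested_support_bound[OF assms] by blast
  define w where "w p r = eval_poly (bracket (bracket a b p) c r) y" for p r
  have w0: "w p r = 0" if "N \<le> p \<or> N \<le> r" for p r
    using N[OF that] by (simp add: w_def)
  have "eval_poly2 (left_nested a b c j) z y
      = eval_poly (\<lambda>k. \<Sum>p\<le>j. sc (of_nat ((k + j - p) choose (j - p))) (w p (k + j - p))) z" for j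
    using assms by (simp add: eval_poly2_def left_nested_def RA_scale_def sum_fun_apply[abs_def]
        eval_poly_sum eval_poly_scale w_def)
  then have "eval_poly3 (left_nested a b c) x z y = eval_poly (\<lambda>p. eval_poly (w p) (x + z)) x"
    unfolding eval_poly3_def using eval_poly_binomial_convolution[OF w0] by simp
  also have "\<dots> = eval_poly (\<lambda>p. lam_symbol (eval_poly (bracket a b p) (- (x + z)))
      (eval_poly c (y + (x + z))) (x + z) y) x"
  proof -
    have "eval_poly (w p) (x + z) = eval_poly2 (bracket (bracket a b p) c) (x + z) y" for p
      by (simp add: w_def[abs_def] eval_poly2_def)
    then show ?thesis
      using assms by (simp add: eval_poly2_bracket)
  qed
  also have "\<dots> = lam_symbol (eval_poly2 (bracket a b) x (- (x + z))) (eval_poly c (y + (x + z))) (x + z) y"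
    unfolding eval_poly2_def using assms
    by (intro eval_poly_linear[OF linear_lam_symbol_left] RA_eval_poly_coeffs) simp
  finally show ?thesis
    using assms by (simp add: eval_poly2_bracket)
qed

text \<open>The conformal Hom-Jacobi identity for \<open>u, v, w \<in> A\<close> at \<open>\<lambda> = x\<close>, \<open>\<mu> = z\<close>, \<open>\<partial> = y\<close>.\<close>
definition lam_jacobi :: "'a \<Rightarrow> 'a \<Rightarrow> 'a \<Rightarrow> complex \<Rightarrow> complex \<Rightarrow> complex \<Rightarrow> bool" where
  "lam_jacobi u v w x y z \<longleftrightarrow>
     lam_symbol (\<alpha> u) (lam_symbol v w z (y + x)) x y
       = lam_symbol (lam_symbol u v x (- (x + z))) (\<alpha> w) (x + z) y + lam_symbol (\<alpha> v) (lam_symbol u w x (y + z)) z y"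

lemma eval_poly3_conformal_jacobi:
  fixes x y z :: complex
  assumes "a \<in> RA" "b \<in> RA" "c \<in> RA"
  defines "u \<equiv> eval_poly a (- x)" and "v \<equiv> eval_poly b (- z)" and "w \<equiv> eval_poly c (y + x + z)"
  shows "eval_poly3 (\<lambda>j k. right_nested (RA_alpha \<alpha> a) b c k j) x z y
      = lam_symbol (\<alpha> u) (lam_symbol v w z (y + x)) x y"
    and "eval_poly3 (\<lambda>j k. left_nested a b (RA_alpha \<alpha> c) j k + right_nested (RA_alpha \<alpha> b) a c j k) x z y
      = lam_symbol (lam_symbol u v x (- (x + z))) (\<alpha> w) (x + z) y + lam_symbol (\<alpha> v) (lam_symbol u w x (y + z)) z y"
proof -
  from assms show "eval_poly3 (\<lambda>j k. right_nested (RA_alpha \<alpha> a) b c k j) x z y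
      = lam_symbol (\<alpha> u) (lam_symbol v w z (y + x)) x y"
    by (simp add: eval_poly3_transpose RA_lam_mu_right_nested eval_poly3_right_nested eval_poly_RA_alpha)
  from assms show "eval_poly3 (\<lambda>j k. left_nested a b (RA_alpha \<alpha> c) j k + right_nested (RA_alpha \<alpha> b) a c j k) x z y
      = lam_symbol (lam_symbol u v x (- (x + z))) (\<alpha> w) (x + z) y + lam_symbol (\<alpha> v) (lam_symbol u w x (y + z)) z y"
    by (simp add: eval_poly3_add RA_lam_mu_left_nested RA_lam_mu_right_nested eval_poly3_left_nested
        eval_poly3_right_nested eval_poly_RA_alpha; simp only: ac_simps)
qed

lemma nested_brackets_iff_lam_jacobi:
  "(\<forall>a\<in>RA. \<forall>b\<in>RA. \<forall>c\<in>RA. (\<lambda>j k. right_nested (RA_alpha \<alpha> a) b c k j)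
      = (\<lambda>j k. left_nested a b (RA_alpha \<alpha> c) j k + right_nested (RA_alpha \<alpha> b) a c j k))
   \<longleftrightarrow> (\<forall>u v w x y z. lam_jacobi u v w x y z)"
proof
  assume jacobi: "\<forall>a\<in>RA. \<forall>b\<in>RA. \<forall>c\<in>RA. (\<lambda>j k. right_nested (RA_alpha \<alpha> a) b c k j)
      = (\<lambda>j k. left_nested a b (RA_alpha \<alpha> c) j k + right_nested (RA_alpha \<alpha> b) a c j k)"
  show "\<forall>u v w x y z. lam_jacobi u v w x y z"
  proof (intro allI)
    fix u v w x y z
    have "(\<lambda>j k. right_nested (RA_alpha \<alpha> (RA_emb u)) (RA_emb v) (RA_emb w) k j)
        = (\<lambda>j k. left_nested (RA_emb u) (RA_emb v) (RA_alpha \<alpha> (RA_emb w)) j k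
                + right_nested (RA_alpha \<alpha> (RA_emb v)) (RA_emb u) (RA_emb w) j k)"
      using jacobi by simp
    then show "lam_jacobi u v w x y z"
      using eval_poly3_conformal_jacobi[where a = "RA_emb u" and b = "RA_emb v" and c = "RA_emb w"
          and x = x and y = y and z = z]
      by (simp add: lam_jacobi_def)
  qed
next
  assume jacobi: "\<forall>u v w x y z. lam_jacobi u v w x y z"
  show "\<forall>a\<in>RA. \<forall>b\<in>RA. \<forall>c\<in>RA. (\<lambda>j k. right_nested (RA_alpha \<alpha> a) b c k j)
      = (\<lambda>j k. left_nested a b (RA_alpha \<alpha> c) j k + right_nested (RA_alpha \<alpha> b) a c j k)"
  proof (intro ballI eval_poly3_inj)
    fix a b c :: "nat \<Rightarrow> 'a" and x z y :: complex
    assume abc: "a \<in> RA" "b \<in> RA" "c \<in> RA"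
    then show "RA_lam_mu (\<lambda>j k. right_nested (RA_alpha \<alpha> a) b c k j)"
      and "RA_lam_mu (\<lambda>j k. left_nested a b (RA_alpha \<alpha> c) j k + right_nested (RA_alpha \<alpha> b) a c j k)"
      by (simp_all add: RA_lam_mu_transpose RA_lam_mu_right_nested RA_lam_mu_add RA_lam_mu_left_nested)
    show "eval_poly3 (\<lambda>j k. right_nested (RA_alpha \<alpha> a) b c k j) x z y
        = eval_poly3 (\<lambda>j k. left_nested a b (RA_alpha \<alpha> c) j k + right_nested (RA_alpha \<alpha> b) a c j k) x z y"
      using jacobi[rule_format, of "eval_poly a (- x)" "eval_poly b (- z)" "eval_poly c (y + x + z)" x y z]
      by (simp only: lam_jacobi_def eval_poly3_conformal_jacobi[OF abc])
  qed
qed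

lemma conformal_jacobi_iff:
  "(\<forall>a\<in>RA. \<forall>b\<in>RA. \<forall>c\<in>RA. \<forall>j k.
      bracket (RA_alpha \<alpha> a) (bracket b c k) j =
        (\<Sum>p\<le>j. RA_scale sc (of_nat ((k + j - p) choose (j - p)))
           (bracket (bracket a b p) (RA_alpha \<alpha> c) (k + j - p)))
        + bracket (RA_alpha \<alpha> b) (bracket a c j) k)
   \<longleftrightarrow> (\<forall>u v w x y z. lam_jacobi u v w x y z)"
  unfolding nested_brackets_iff_lam_jacobi[symmetric]
  by (simp add: right_nested_def left_nested_def fun_eq_iff)

lemma hom_lie_conformal_RA_iff:
  "hom_lie_conformal (RA_scale sc) RA RA_D (RA_alpha \<alpha>) bracket \<longleftrightarrow>
     (\<forall>u v. br u v = - br v u) \<and> (\<forall>u v w x y z. lam_jacobi u v w x y z)"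
  unfolding hom_lie_conformal_def conformal_skew_iff conformal_jacobi_iff
  by (simp add: vector_space_RA_scale finite_bracket_support bracket_add_left bracket_add_right
      bracket_scale_left bracket_scale_right bracket_RA_D_left RA_D_add RA_alpha_add RA_D_RA_scale
      RA_alpha_RA_scale RA_alpha_RA_D)

section \<open>The identities in \<open>A\<close>\<close>

definition skew_defect :: "'a \<Rightarrow> 'a \<Rightarrow> 'a" where
  "skew_defect a b = br a b + br b a"

definition hom_jacobiator :: "'a \<Rightarrow> 'a \<Rightarrow> 'a \<Rightarrow> 'a" where
  "hom_jacobiator a b c = br (br a b) (\<alpha> c) + br (br b c) (\<alpha> a) + br (br c a) (\<alpha> b)"

definition left_symmetry_defect :: "'a \<Rightarrow> 'a \<Rightarrow> 'a \<Rightarrow> 'a" where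
  "left_symmetry_defect a b c =
     circ (circ a b) (\<alpha> c) - circ (\<alpha> a) (circ b c) - (circ (circ b a) (\<alpha> c) - circ (\<alpha> b) (circ a c))"

definition right_commutativity_defect :: "'a \<Rightarrow> 'a \<Rightarrow> 'a \<Rightarrow> 'a" where
  "right_commutativity_defect a b c = circ (circ a b) (\<alpha> c) - circ (circ a c) (\<alpha> b)"

definition compatibility_defect :: "'a \<Rightarrow> 'a \<Rightarrow> 'a \<Rightarrow> 'a" where
  "compatibility_defect a b c = br (circ a b) (\<alpha> c) - br (circ a c) (\<alpha> b) + circ (br a b) (\<alpha> c)
     - circ (br a c) (\<alpha> b) - circ (\<alpha> a) (br b c)"

lemma hom_GD_bialgebra_iff_defects:
  "hom_GD_bialgebra br circ \<alpha> \<longleftrightarrow>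
     (\<forall>a b. skew_defect a b = 0) \<and>
     (\<forall>a b c. hom_jacobiator a b c = 0 \<and> left_symmetry_defect a b c = 0
        \<and> right_commutativity_defect a b c = 0 \<and> compatibility_defect a b c = 0)"
  unfolding hom_GD_bialgebra_def hom_lie_def hom_novikov_def skew_defect_def hom_jacobiator_def
    left_symmetry_defect_def right_commutativity_defect_def compatibility_defect_def
  by (simp only: eq_neg_iff_add_eq_0 right_minus_eq all_conj_distrib) blast

text \<open>The combinations of defects forming the coefficients were found by solving a linear system.\<close>
lemma lam_jacobi_iff_expansion:
  "lam_jacobi u v w x y z \<longleftrightarrow>
     hom_jacobiator u w v - br (skew_defect u w) (\<alpha> v) - skew_defect (br v u) (\<alpha> w)
     + sc x (compatibility_defect w v u - compatibility_defect u w v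
         - skew_defect (circ u v) (\<alpha> w) - circ (skew_defect u v) (\<alpha> w) + circ (skew_defect u w) (\<alpha> v))
     + sc y (compatibility_defect w v u)
     + sc z (compatibility_defect v w u + compatibility_defect w v u
         + skew_defect (circ v u) (\<alpha> w) - circ (skew_defect v w) (\<alpha> u))
     - sc (x * x) (right_commutativity_defect u v w + left_symmetry_defect u w v + right_commutativity_defect w u v)
     + sc (x * y) (right_commutativity_defect w v u - right_commutativity_defect w u v - left_symmetry_defect u w v)
     + sc (x * z) (left_symmetry_defect v w u - left_symmetry_defect u v w - left_symmetry_defect u w v
         + right_commutativity_defect w v u - right_commutativity_defect w u v)
     - sc (y * y) (right_commutativity_defect w u v)
     + sc (y * z) (left_symmetry_defect v w u + right_commutativity_defect w v u - right_commutativity_defect w u v)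
     + sc (z * z) (right_commutativity_defect v u w + left_symmetry_defect v w u - right_commutativity_defect w u v)
     = 0" (is "_ \<longleftrightarrow> ?E = 0")
proof -
  have "lam_symbol (\<alpha> u) (lam_symbol v w z (y + x)) x y
     - (lam_symbol (lam_symbol u v x (- (x + z))) (\<alpha> w) (x + z) y + lam_symbol (\<alpha> v) (lam_symbol u w x (y + z)) z y)
     = ?E"
    by (simp add: lam_symbol_def skew_defect_def hom_jacobiator_def left_symmetry_defect_def
        right_commutativity_defect_def compatibility_defect_def algebra_simps)
  then show ?thesis
    unfolding lam_jacobi_def by (metis right_minus_eq)
qed

lemma lam_jacobi_iff_defects:
  assumes skew: "\<And>a b. skew_defect a b = 0"
  shows "(\<forall>u v w x y z. lam_jacobi u v w x y z) \<longleftrightarrow>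
    (\<forall>a b c. hom_jacobiator a b c = 0 \<and> left_symmetry_defect a b c = 0
       \<and> right_commutativity_defect a b c = 0 \<and> compatibility_defect a b c = 0)"
proof
  assume jacobi: "\<forall>u v w x y z. lam_jacobi u v w x y z"
  \<comment> \<open>Setting \<open>x = z = 0\<close> leaves a quadratic polynomial in \<open>y\<close>.\<close>
  have y_coeffs: "hom_jacobiator u w v = 0 \<and> compatibility_defect w v u = 0
      \<and> - right_commutativity_defect w u v = 0" for u v w
  proof (rule quadratic_coeffs_eq_0)
    fix t
    show "hom_jacobiator u w v + sc t (compatibility_defect w v u) + sc (t * t) (- right_commutativity_defect w u v) = 0"
      using jacobi[rule_format, of u v w 0 t 0] by (simp add: lam_jacobi_iff_expansion skew)
  qed
  then have jac: "hom_jacobiator a b c = 0" and comp: "compatibility_defect a b c = 0"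
    and rcomm: "right_commutativity_defect a b c = 0" for a b c
    by (metis neg_equal_0_iff_equal)+
  \<comment> \<open>With these, setting \<open>x = y = 0, z = 1\<close> leaves the left-symmetry defect.\<close>
  have "left_symmetry_defect v w u = 0" for u v w
    using jacobi[rule_format, of u v w 0 0 1] by (simp add: lam_jacobi_iff_expansion skew jac comp rcomm)
  then show "\<forall>a b c. hom_jacobiator a b c = 0 \<and> left_symmetry_defect a b c = 0
       \<and> right_commutativity_defect a b c = 0 \<and> compatibility_defect a b c = 0"
    by (simp add: jac comp rcomm)
qed (simp add: lam_jacobi_iff_expansion skew)

lemma hom_GD_bialgebra_iff_lam_jacobi:
  "hom_GD_bialgebra br circ \<alpha> \<longleftrightarrow> (\<forall>u v. br u v = - br v u) \<and> (\<forall>u v w x y z. lam_jacobi u v w x y z)"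
proof -
  have "(\<forall>u v. br u v = - br v u) \<longleftrightarrow> (\<forall>a b. skew_defect a b = 0)"
    by (simp add: skew_defect_def eq_neg_iff_add_eq_0)
  then show ?thesis
    using hom_GD_bialgebra_iff_defects lam_jacobi_iff_defects by blast
qed

end

theorem theorem5p2:
  fixes sc :: "complex \<Rightarrow> 'a::ab_group_add \<Rightarrow> 'a"
    and br circ :: "'a \<Rightarrow> 'a \<Rightarrow> 'a"
    and \<alpha> :: "'a \<Rightarrow> 'a"
  assumes "vector_space sc"
    and "Vector_Spaces.linear sc sc \<alpha>"
    and "cbilinear sc br"
    and "cbilinear sc circ"
  shows "hom_GD_bialgebra br circ \<alpha> \<longleftrightarrow>
           (hom_lie_conformal (RA_scale sc) RA RA_D (RA_alpha \<alpha>) (RA_bracket sc br circ)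
            \<and> RA_degree 2 (RA_bracket sc br circ))"
proof -
  interpret GD_setting sc br circ \<alpha>
    using assms by (simp add: GD_setting_def GD_setting_axioms_def char0_vector_space_def)
  show ?thesis
    using hom_GD_bialgebra_iff_lam_jacobi hom_lie_conformal_RA_iff RA_degree_2_bracket by blast
qed

end
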